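(* Let $\mathcal{A}$ be an Ershov $\mathcal{C}$-algebra. Then $\mathcal{A}$ is weakly equationally Noetherian if and only if both of the following hold: \begin{enumerate} \item every subset of $\mathcal{C}$ that is bounded above in $\mathcal{A}$ has a supremum in $\mathcal{A}$, and this supremum belongs to $\mathcal{C}$; \item for every set $\{c_j \mid j\in J\} \subseteq \mathcal{C}$ that is not bounded above there exists $c \in \mathcal{C}$ such that the system $\{x \wedge c_j = 0 \mid j \in J\}$ in one variable $x$ is equivalent over $\mathcal{A}$ to the equation $x \leq c$. \end{enumerate}
   Context: An Ershov algebra is a structure $\langle A; \vee, \wedge, \setminus, 0\rangle$ such that $\langle A;\vee,\wedge\rangle$ is a distributive lattice with least element $0$, and $b \setminus a$ is the relative complement: the unique $z$ with $z \wedge a = 0$ and $z \vee a = a \vee b$. An Ershov $\mathcal{C}$-algebra is an Ershov algebra $\mathcal{A}$ together with a distinguished subalgebra $\mathcal{C}$ whose elements are added as constant symbols; $\mathcal{L}$ is the language $\{\vee,\wedge,\setminus,0\}$ plus these constants. An equation is $t(\bar x)=s(\bar x)$ with $t,s$ terms of $\mathcal{L}$; $t\le s$ means the equation $t\vee s=s$. Two systems of equations are equivalent over $\mathcal{A}$ if they have the same solution set. $\mathcal{A}$ is weakly equationally Noetherian if every system of equations (possibly infinite) in finitely many variables is equivalent over $\mathcal{A}$ to some finite system of equations of $\mathcal{L}$. "Not bounded above" means having no upper bound in $\mathcal{A}$. *)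

theory Defs
  imports Main
begin

text \<open>An Ershov algebra is modelled as a type carrying a distributive lattice
  with least element bot (0) and an operation minus (relative complement
  b - a), satisfying the defining property of the relative complement.\<close>

definition ershov_algebra :: "'a::{distrib_lattice,order_bot,minus} itself \<Rightarrow> bool" where
  "ershov_algebra _ \<longleftrightarrow>
     (\<forall>a b::'a. inf (b - a) a = bot \<and> sup (b - a) a = sup a b)"

definition ershov_subalgebra :: "'a::{distrib_lattice,order_bot,minus} set \<Rightarrow> bool" where
  "ershov_subalgebra C \<longleftrightarrow> bot \<in> C \<and>
     (\<forall>a\<in>C. \<forall>b\<in>C. sup a b \<in> C \<and> inf a b \<in> C \<and> a - b \<in> C)"

datatype 'a trm = Var nat | Cst 'a | Join "'a trm" "'a trm" | Meet "'a trm" "'a trm"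
  | Diff "'a trm" "'a trm" | Zero

fun eval :: "(nat \<Rightarrow> 'a::{distrib_lattice,order_bot,minus}) \<Rightarrow> 'a trm \<Rightarrow> 'a" where
  "eval v (Var i) = v i"
| "eval v (Cst c) = c"
| "eval v (Join t s) = sup (eval v t) (eval v s)"
| "eval v (Meet t s) = inf (eval v t) (eval v s)"
| "eval v (Diff t s) = eval v t - eval v s"
| "eval v Zero = bot"

fun vars :: "'a trm \<Rightarrow> nat set" where
  "vars (Var i) = {i}"
| "vars (Cst c) = {}"
| "vars (Join t s) = vars t \<union> vars s"
| "vars (Meet t s) = vars t \<union> vars s"
| "vars (Diff t s) = vars t \<union> vars s"
| "vars Zero = {}"

fun csts :: "'a trm \<Rightarrow> 'a set" where
  "csts (Var i) = {}"
| "csts (Cst c) = {c}"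
| "csts (Join t s) = csts t \<union> csts s"
| "csts (Meet t s) = csts t \<union> csts s"
| "csts (Diff t s) = csts t \<union> csts s"
| "csts Zero = {}"

type_synonym 'a eqn = "'a trm \<times> 'a trm"

definition eqn_over :: "'a set \<Rightarrow> nat \<Rightarrow> 'a eqn \<Rightarrow> bool" where
  "eqn_over C n e \<longleftrightarrow> csts (fst e) \<union> csts (snd e) \<subseteq> C \<and>
     vars (fst e) \<union> vars (snd e) \<subseteq> {..<n}"

definition sol :: "'a::{distrib_lattice,order_bot,minus} eqn set \<Rightarrow> (nat \<Rightarrow> 'a) set" where
  "sol S = {v. \<forall>e\<in>S. eval v (fst e) = eval v (snd e)}"

definition leq_eqn :: "'a trm \<Rightarrow> 'a trm \<Rightarrow> 'a eqn" where
  "leq_eqn t s = (Join t s, s)"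

definition weakly_eq_noetherian :: "'a::{distrib_lattice,order_bot,minus} set \<Rightarrow> bool" where
  "weakly_eq_noetherian C \<longleftrightarrow>
     (\<forall>n. \<forall>S. (\<forall>e\<in>S. eqn_over C n e) \<longrightarrow>
        (\<exists>F. finite F \<and> (\<forall>e\<in>F. eqn_over C n e) \<and> sol F = sol S))"

definition bounded_above :: "'a::order set \<Rightarrow> bool" where
  "bounded_above X \<longleftrightarrow> (\<exists>u. \<forall>x\<in>X. x \<le> u)"

definition is_supremum :: "'a::order \<Rightarrow> 'a set \<Rightarrow> bool" where
  "is_supremum s X \<longleftrightarrow> (\<forall>x\<in>X. x \<le> s) \<and> (\<forall>u. (\<forall>x\<in>X. x \<le> u) \<longrightarrow> s \<le> u)"

end

theory Submission
  imports Defs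
begin

text \<open>An equation t = s in x_0, ..., x_(n-1) says that (t - s) \<squnion> (s - t) vanishes, and an
  element vanishes iff its parts in all cells cut out by x_0, ..., x_(n-1) vanish. On the cell
  outside all variables a term is a constant c, which gives c \<le> x_0 \<squnion> ... \<squnion> x_(n-1); on a
  nonempty cell with atom R it is R \<sqinter> a or R - a, which gives R \<sqinter> a = 0 or R \<le> a. So every
  system is a union of finitely many families {c_j \<le> T}, {T \<sqinter> c_j = 0}, {T \<le> c_j}, with one term T
  per family. Condition 1 collapses the first family to \<Squnion>c_j \<le> T, the third to
  T \<le> a - \<Squnion>(a - c_j) for any member a, and the second, if bounded, to T \<sqinter> \<Squnion>c_j = 0; condition 2 is
  exactly what handles the unbounded case. Conversely, a finite system in one variable has a
  solution set {x. d \<le> x \<and> x \<sqinter> p = 0 \<and> x \<le> q} (possibly without the last conjunct), and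
  applying this to {c_j \<le> x} and {x \<sqinter> c_j = 0} yields both conditions.\<close>

lemma distrib_cancel:
  fixes x y a :: "'a::distrib_lattice"
  assumes "inf x a = inf y a" and "sup x a = sup y a"
  shows "x = y"
proof -
  have "x = inf x (sup y a)" using assms(2) by (metis inf_sup_absorb)
  also have "\<dots> = sup (inf x y) (inf y a)" using assms(1) by (simp add: inf_sup_distrib1)
  also have "\<dots> = inf y (sup x a)" by (simp add: inf_sup_distrib1 inf_commute)
  also have "\<dots> = y" using assms(2) by (metis inf_sup_absorb)
  finally show ?thesis .
qed

lemma eq_if_same_upper_bounds: "(\<And>z. x \<le> z \<longleftrightarrow> y \<le> z) \<Longrightarrow> x = (y::'a::order)"
  by (metis order.refl order.antisym)

lemma bot_inf_absorb [simp]: "inf bot (x::'a::{distrib_lattice,order_bot}) = bot"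
  by (simp add: inf_absorb1)

lemma inf_bot_absorb [simp]: "inf (x::'a::{distrib_lattice,order_bot}) bot = bot"
  by (simp add: inf_absorb2)

lemma bot_sup_absorb [simp]: "sup bot (x::'a::{distrib_lattice,order_bot}) = x"
  by (simp add: sup_absorb2)

lemma sup_bot_absorb [simp]: "sup (x::'a::{distrib_lattice,order_bot}) bot = x"
  by (simp add: sup_absorb1)

lemma sup_eq_bot: "sup x y = bot \<longleftrightarrow> (x::'a::{distrib_lattice,order_bot}) = bot \<and> y = bot"
  by (metis bot_unique sup_ge1 sup_ge2 bot_sup_absorb)

lemma inf_eq_bot_mono: "(x::'a::{distrib_lattice,order_bot}) \<le> y \<Longrightarrow> inf y z = bot \<Longrightarrow> inf x z = bot"
  by (metis bot_unique inf_mono order_refl)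

section \<open>Cells and the normal form of an equation\<close>

text \<open>For a valuation v, the elements cell v n S x with S \<subseteq> {..<n} are the parts of x lying
  inside v i for i \<in> S and outside v i for the other i < n; they partition x.\<close>

fun cell :: "(nat \<Rightarrow> 'a::{distrib_lattice,order_bot,minus}) \<Rightarrow> nat \<Rightarrow> nat set \<Rightarrow> 'a \<Rightarrow> 'a" where
  "cell v 0 S x = x"
| "cell v (Suc n) S x = (if n \<in> S then inf (cell v n S x) (v n) else cell v n S x - v n)"

fun cell_trm :: "nat \<Rightarrow> nat set \<Rightarrow> 'a trm \<Rightarrow> 'a trm" where
  "cell_trm 0 S t = t"
| "cell_trm (Suc n) S t =
     (if n \<in> S then Meet (cell_trm n S t) (Var n) else Diff (cell_trm n S t) (Var n))"

fun join_vars :: "nat \<Rightarrow> 'a trm" where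
  "join_vars 0 = Zero"
| "join_vars (Suc n) = Join (join_vars n) (Var n)"

lemma eval_cell_trm: "eval v (cell_trm n S t) = cell v n S (eval v t)"
  by (induction n) auto

lemma vars_cell_trm: "vars (cell_trm n S t) \<subseteq> vars t \<union> {..<n}"
  by (induction n) auto

lemma csts_cell_trm: "csts (cell_trm n S t) = csts t"
  by (induction n) auto

lemma vars_join_vars: "vars (join_vars n) \<subseteq> {..<n}"
  by (induction n) auto

lemma csts_join_vars: "csts (join_vars n) = {}"
  by (induction n) auto

lemma eval_in_subalgebra:
  "ershov_subalgebra C \<Longrightarrow> csts t \<subseteq> C \<Longrightarrow> (\<And>i. v i \<in> C) \<Longrightarrow> eval v t \<in> C"
  by (induction t) (auto simp: ershov_subalgebra_def)

text \<open>On a nonempty cell S the variables x_i, i \<in> S, all restrict to one element R and the others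
  to 0, as under atom_valuation S R. Below R every term is then R \<sqinter> a or R - a for a constant
  a; the form (True, a), resp. (False, a), records which.\<close>

definition atom_valuation :: "nat set \<Rightarrow> 'a::order_bot \<Rightarrow> nat \<Rightarrow> 'a" where
  "atom_valuation S R = (\<lambda>i. if i \<in> S then R else bot)"

definition form_val :: "bool \<times> 'a \<Rightarrow> 'a::{distrib_lattice,order_bot,minus} \<Rightarrow> 'a" where
  "form_val f R = (if fst f then inf R (snd f) else R - snd f)"

fun join_form :: "bool \<times> 'a \<Rightarrow> bool \<times> 'a \<Rightarrow> bool \<times> 'a::{distrib_lattice,order_bot,minus}" where
  "join_form (p, a) (q, b) =
     (if p then (if q then (True, sup a b) else (False, b - a))
      else (if q then (False, a - b) else (False, inf a b)))"

fun meet_form :: "bool \<times> 'a \<Rightarrow> bool \<times> 'a \<Rightarrow> bool \<times> 'a::{distrib_lattice,order_bot,minus}" where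
  "meet_form (p, a) (q, b) =
     (if p then (if q then (True, inf a b) else (True, a - b))
      else (if q then (True, b - a) else (False, sup a b)))"

fun diff_form :: "bool \<times> 'a \<Rightarrow> bool \<times> 'a \<Rightarrow> bool \<times> 'a::{distrib_lattice,order_bot,minus}" where
  "diff_form (p, a) (q, b) =
     (if p then (if q then (True, a - b) else (True, inf a b))
      else (if q then (False, sup a b) else (True, b - a)))"

fun form :: "nat set \<Rightarrow> 'a::{distrib_lattice,order_bot,minus} trm \<Rightarrow> bool \<times> 'a" where
  "form S (Var i) = (if i \<in> S then (False, bot) else (True, bot))"
| "form S (Cst c) = (True, c)"
| "form S Zero = (True, bot)"
| "form S (Join t s) = join_form (form S t) (form S s)"
| "form S (Meet t s) = meet_form (form S t) (form S s)"
| "form S (Diff t s) = diff_form (form S t) (form S s)"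

lemma form_in_subalgebra:
  assumes "ershov_subalgebra C"
  shows "csts t \<subseteq> C \<Longrightarrow> snd (form S t) \<in> C"
proof (induction t)
  case (Join t s)
  then show ?case
    using assms by (cases "form S t"; cases "form S s") (auto simp: ershov_subalgebra_def)
next
  case (Meet t s)
  then show ?case
    using assms by (cases "form S t"; cases "form S s") (auto simp: ershov_subalgebra_def)
next
  case (Diff t s)
  then show ?case
    using assms by (cases "form S t"; cases "form S s") (auto simp: ershov_subalgebra_def)
qed (use assms in \<open>auto simp: ershov_subalgebra_def\<close>)

definition disj_eqn :: "'a trm \<Rightarrow> 'a \<Rightarrow> 'a eqn" where
  "disj_eqn t a = (Meet t (Cst a), Zero)"

definition below_eqn :: "'a trm \<Rightarrow> 'a \<Rightarrow> 'a eqn" where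
  "below_eqn t a = (Diff t (Cst a), Zero)"

definition above_eqn :: "'a trm \<Rightarrow> 'a \<Rightarrow> 'a eqn" where
  "above_eqn t a = (Diff (Cst a) t, Zero)"

definition sym_diff_trm :: "'a eqn \<Rightarrow> 'a trm" where
  "sym_diff_trm e = Join (Diff (fst e) (snd e)) (Diff (snd e) (fst e))"

definition index_sets :: "nat \<Rightarrow> nat set set" where
  "index_sets n = {S. S \<subseteq> {..<n} \<and> S \<noteq> {}}"

definition atom_trm :: "nat \<Rightarrow> nat set \<Rightarrow> 'a trm" where
  "atom_trm n S = cell_trm n S (Var (Min S))"

definition cell_eqn :: "nat \<Rightarrow> 'a::{distrib_lattice,order_bot,minus} trm \<Rightarrow> nat set \<Rightarrow> 'a eqn" where
  "cell_eqn n t S =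
     (if fst (form S t) then disj_eqn (atom_trm n S) (snd (form S t))
      else below_eqn (atom_trm n S) (snd (form S t)))"

definition vanishing_system :: "nat \<Rightarrow> 'a::{distrib_lattice,order_bot,minus} trm \<Rightarrow> 'a eqn set" where
  "vanishing_system n t =
     insert (above_eqn (join_vars n) (eval (\<lambda>_. bot) t)) (cell_eqn n t ` index_sets n)"

lemma finite_index_sets: "finite (index_sets n)"
  by (rule finite_subset[of _ "Pow {..<n}"]) (auto simp: index_sets_def)

lemma atom_trm_over:
  assumes "S \<in> index_sets n"
  shows "vars (atom_trm n S) \<subseteq> {..<n}" and "csts (atom_trm n S) = {}"
proof -
  have "Min S \<in> S" using assms finite_subset[of S "{..<n}"] by (auto simp: index_sets_def)
  then have "Min S < n" using assms by (auto simp: index_sets_def)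
  then show "vars (atom_trm n S) \<subseteq> {..<n}"
    using vars_cell_trm[of n S "Var (Min S)"] by (auto simp: atom_trm_def)
  show "csts (atom_trm n S) = {}" by (simp add: atom_trm_def csts_cell_trm)
qed

lemma eqn_over_basic:
  assumes "a \<in> C" "csts t \<subseteq> C" "vars t \<subseteq> {..<n}"
  shows "eqn_over C n (disj_eqn t a)" "eqn_over C n (below_eqn t a)" "eqn_over C n (above_eqn t a)"
  using assms by (auto simp: eqn_over_def disj_eqn_def below_eqn_def above_eqn_def)

lemma vanishing_system_subset:
  assumes "ershov_subalgebra C" and "csts t \<subseteq> C"
  shows "vanishing_system n t \<subseteq> above_eqn (join_vars n) ` C \<union>
    (\<Union>S\<in>index_sets n. disj_eqn (atom_trm n S) ` C \<union> below_eqn (atom_trm n S) ` C)"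
proof -
  have "eval (\<lambda>_. bot) t \<in> C"
    using assms eval_in_subalgebra[of C t] by (auto simp: ershov_subalgebra_def)
  moreover have "snd (form S t) \<in> C" for S using form_in_subalgebra[OF assms] .
  ultimately show ?thesis unfolding vanishing_system_def cell_eqn_def by auto
qed

section \<open>Finitely equivalent systems\<close>

lemma sol_Un: "sol (A \<union> B) = sol A \<inter> sol B"
  by (auto simp: sol_def)

lemma sol_UN: "sol (\<Union>i\<in>I. A i) = (\<Inter>i\<in>I. sol (A i))"
  by (auto simp: sol_def)

lemma sol_eq_INT_singletons: "sol A = (\<Inter>e\<in>A. sol {e})"
  by (auto simp: sol_def)

lemma sol_disj_eqns: "sol (disj_eqn t ` Y) = {v. \<forall>a\<in>Y. inf (eval v t) a = bot}"
  by (auto simp: sol_def disj_eqn_def)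

definition finitely_equivalent :: "'a set \<Rightarrow> nat \<Rightarrow> 'a::{distrib_lattice,order_bot,minus} eqn set \<Rightarrow> bool" where
  "finitely_equivalent C n A \<longleftrightarrow> (\<exists>F. finite F \<and> (\<forall>e\<in>F. eqn_over C n e) \<and> sol F = sol A)"

lemma weakly_eq_noetherian_iff:
  "weakly_eq_noetherian C \<longleftrightarrow> (\<forall>n A. (\<forall>e\<in>A. eqn_over C n e) \<longrightarrow> finitely_equivalent C n A)"
  by (simp add: weakly_eq_noetherian_def finitely_equivalent_def)

lemma finitely_equivalentI: "sol {e} = sol A \<Longrightarrow> eqn_over C n e \<Longrightarrow> finitely_equivalent C n A"
  unfolding finitely_equivalent_def by (intro exI[of _ "{e}"]) auto

lemma finitely_equivalent_UN:
  assumes "finite I" and "\<And>i. i \<in> I \<Longrightarrow> finitely_equivalent C n (A i)"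
  shows "finitely_equivalent C n (\<Union>i\<in>I. A i)"
proof -
  obtain F where F: "\<And>i. i \<in> I \<Longrightarrow> finite (F i) \<and> (\<forall>e\<in>F i. eqn_over C n e) \<and> sol (F i) = sol (A i)"
    using assms(2) unfolding finitely_equivalent_def by metis
  have "sol (\<Union>i\<in>I. F i) = sol (\<Union>i\<in>I. A i)" using F by (simp add: sol_UN)
  then show ?thesis
    unfolding finitely_equivalent_def using assms(1) F by (intro exI[of _ "\<Union>i\<in>I. F i"]) auto
qed

lemma finitely_equivalent_families:
  assumes "finite Fs" and "A \<subseteq> (\<Union>f\<in>Fs. f ` C)"
    and "\<And>f Y. f \<in> Fs \<Longrightarrow> Y \<subseteq> C \<Longrightarrow> finitely_equivalent C n (f ` Y)"
  shows "finitely_equivalent C n A"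
proof -
  have "A = (\<Union>f\<in>Fs. f ` {a \<in> C. f a \<in> A})" using assms(2) by blast
  moreover have "finitely_equivalent C n (\<Union>f\<in>Fs. f ` {a \<in> C. f a \<in> A})"
    using assms(1,3) by (intro finitely_equivalent_UN) auto
  ultimately show ?thesis by simp
qed

definition bounded_sups_in :: "'a::order set \<Rightarrow> bool" where
  "bounded_sups_in C \<longleftrightarrow> (\<forall>X. X \<subseteq> C \<and> bounded_above X \<longrightarrow> (\<exists>s\<in>C. is_supremum s X))"

definition principal_annihilators :: "'a::{distrib_lattice,order_bot,minus} set \<Rightarrow> bool" where
  "principal_annihilators C \<longleftrightarrow>
     (\<forall>X. X \<subseteq> C \<and> \<not> bounded_above X \<longrightarrow>
        (\<exists>c\<in>C. sol ((\<lambda>cj. (Meet (Var 0) (Cst cj), Zero)) ` X) = sol {leq_eqn (Var 0) (Cst c)}))"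

lemma Collect_var0_eq_iff: "{v::nat \<Rightarrow> 'a. P (v 0)} = {v. Q (v 0)} \<longleftrightarrow> (\<forall>x. P x \<longleftrightarrow> Q x)"
proof
  assume "{v::nat \<Rightarrow> 'a. P (v 0)} = {v. Q (v 0)}"
  then have "(\<lambda>_. x) \<in> {v::nat \<Rightarrow> 'a. P (v 0)} \<longleftrightarrow> (\<lambda>_. x) \<in> {v. Q (v 0)}" for x by simp
  then show "\<forall>x. P x \<longleftrightarrow> Q x" by simp
qed simp

lemma principal_annihilators_iff:
  "principal_annihilators C \<longleftrightarrow>
     (\<forall>X. X \<subseteq> C \<and> \<not> bounded_above X \<longrightarrow>
        (\<exists>c\<in>C. \<forall>x. (\<forall>a\<in>X. inf x a = bot) \<longleftrightarrow> x \<le> c))"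
proof -
  have "sol ((\<lambda>cj. (Meet (Var 0) (Cst cj), Zero)) ` X) = {v. \<forall>a\<in>X. inf (v 0) a = bot}"
    for X :: "'a set" by (auto simp: sol_def)
  moreover have "sol {leq_eqn (Var 0) (Cst c)} = {v. v 0 \<le> c}" for c :: 'a
    by (auto simp: sol_def leq_eqn_def le_iff_sup)
  moreover have "{v::nat \<Rightarrow> 'a. \<forall>a\<in>X. inf (v 0) a = bot} = {v. v 0 \<le> c} \<longleftrightarrow>
      (\<forall>x. (\<forall>a\<in>X. inf x a = bot) \<longleftrightarrow> x \<le> c)" for X and c :: 'a
    by (rule Collect_var0_eq_iff)
  ultimately show ?thesis unfolding principal_annihilators_def by simp
qed

definition basic_solset :: "'a set \<Rightarrow> (nat \<Rightarrow> 'a::{distrib_lattice,order_bot}) set \<Rightarrow> bool" where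
  "basic_solset C A \<longleftrightarrow>
     (\<exists>d\<in>C. \<exists>p\<in>C. \<exists>q\<in>C. \<exists>b. A = {v. d \<le> v 0 \<and> inf (v 0) p = bot \<and> (b \<longrightarrow> v 0 \<le> q)})"

lemma basic_solset_UNIV: "ershov_subalgebra C \<Longrightarrow> basic_solset C UNIV"
  unfolding basic_solset_def ershov_subalgebra_def by (intro bexI[of _ bot] exI[of _ False]) auto

lemma basic_solset_Int:
  assumes C: "ershov_subalgebra C" and "basic_solset C A" and "basic_solset C B"
  shows "basic_solset C (A \<inter> B)"
proof -
  obtain d1 p1 q1 b1 where 1: "d1 \<in> C" "p1 \<in> C" "q1 \<in> C"
    "A = {v. d1 \<le> v 0 \<and> inf (v 0) p1 = bot \<and> (b1 \<longrightarrow> v 0 \<le> q1)}"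
    using assms(2) unfolding basic_solset_def by blast
  obtain d2 p2 q2 b2 where 2: "d2 \<in> C" "p2 \<in> C" "q2 \<in> C"
    "B = {v. d2 \<le> v 0 \<and> inf (v 0) p2 = bot \<and> (b2 \<longrightarrow> v 0 \<le> q2)}"
    using assms(3) unfolding basic_solset_def by blast
  define q where "q = (if b1 then (if b2 then inf q1 q2 else q1) else q2)"
  have "q \<in> C" "sup d1 d2 \<in> C" "sup p1 p2 \<in> C"
    using 1 2 C unfolding q_def ershov_subalgebra_def by auto
  moreover have "A \<inter> B =
      {v. sup d1 d2 \<le> v 0 \<and> inf (v 0) (sup p1 p2) = bot \<and> (b1 \<or> b2 \<longrightarrow> v 0 \<le> q)}"
    unfolding 1(4) 2(4) q_def by (auto simp: inf_sup_distrib1 sup_eq_bot)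
  ultimately show ?thesis unfolding basic_solset_def by blast
qed

lemma basic_solset_pointwise:
  assumes "basic_solset C A" and "\<And>v. v \<in> A \<longleftrightarrow> P (v 0)"
  obtains d p q b where "d \<in> C" "p \<in> C" "q \<in> C"
    and "\<And>x. P x \<longleftrightarrow> d \<le> x \<and> inf x p = bot \<and> (b \<longrightarrow> x \<le> q)"
proof -
  obtain d p q b where "d \<in> C" "p \<in> C" "q \<in> C"
    and A: "A = {v. d \<le> v 0 \<and> inf (v 0) p = bot \<and> (b \<longrightarrow> v 0 \<le> q)}"
    using assms(1) unfolding basic_solset_def by blast
  moreover have "P x \<longleftrightarrow> d \<le> x \<and> inf x p = bot \<and> (b \<longrightarrow> x \<le> q)" for x
    using assms(2)[of "\<lambda>_. x"] A by simp
  ultimately show ?thesis using that by blast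
qed

section \<open>Relative complements\<close>

context
  assumes ershov: "ershov_algebra TYPE('a::{distrib_lattice,order_bot,minus})"
begin

lemma inf_diff_self: "inf (b - a) a = (bot::'a)"
  using ershov unfolding ershov_algebra_def by blast

lemma sup_diff_self: "sup (b - a) a = sup a (b::'a)"
  using ershov unfolding ershov_algebra_def by blast

lemma sup_diff_absorb: "sup a (b - a) = sup a (b::'a)"
  using sup_diff_self by (simp add: sup_commute)

lemma diff_unique: "inf z a = bot \<Longrightarrow> sup z a = sup a b \<Longrightarrow> b - a = (z::'a)"
  by (metis distrib_cancel inf_diff_self sup_diff_self)

lemma diff_le_minuend: "(x::'a) - y \<le> x"
proof -
  have "x - y = inf (x - y) (sup (x - y) y)" by simp
  also have "sup (x - y) y = sup y x" by (rule sup_diff_self)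
  also have "inf (x - y) (sup y x) = sup (inf (x - y) y) (inf (x - y) x)"
    by (rule inf_sup_distrib1)
  also have "\<dots> = inf (x - y) x" by (simp add: inf_diff_self)
  finally show ?thesis by (metis inf.cobounded2)
qed

lemma diff_le_iff: "(x::'a) - y \<le> z \<longleftrightarrow> x \<le> sup y z"
proof
  assume "x - y \<le> z"
  then have "sup (x - y) y \<le> sup y z" by (simp add: le_supI1 le_supI2)
  then show "x \<le> sup y z" by (simp add: sup_diff_self)
next
  assume "x \<le> sup y z"
  then have "x - y \<le> inf (x - y) (sup y z)"
    using diff_le_minuend by (meson le_inf_iff order.trans order.refl)
  also have "\<dots> = inf (x - y) z" by (simp add: inf_sup_distrib1 inf_diff_self)
  finally show "x - y \<le> z" by simp
qed

lemma diff_eq_bot_iff: "(x::'a) - y = bot \<longleftrightarrow> x \<le> y"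
  using diff_le_iff[of x y bot] by (simp add: bot_unique)

lemma sup_diff_distrib: "sup x y - (v::'a) = sup (x - v) (y - v)"
  by (rule eq_if_same_upper_bounds) (simp add: diff_le_iff)

lemma diff_diff_sup: "(x - a) - (b::'a) = x - sup a b"
  by (rule eq_if_same_upper_bounds) (simp add: diff_le_iff sup_assoc)

lemma diff_diff_distrib: "(x - y) - (v::'a) = (x - v) - (y - v)"
proof (rule eq_if_same_upper_bounds)
  fix z
  have "sup v (sup (y - v) z) = sup y (sup v z)"
    by (metis sup_diff_absorb sup_assoc sup_left_commute)
  then show "(x - y) - v \<le> z \<longleftrightarrow> (x - v) - (y - v) \<le> z" by (simp add: diff_le_iff)
qed

lemma diff_inf_right: "(x::'a) - y = x - inf x y"
proof (rule eq_if_same_upper_bounds)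
  fix z
  show "x - y \<le> z \<longleftrightarrow> x - inf x y \<le> z"
    by (simp add: diff_le_iff sup_inf_distrib2 le_supI1)
qed

lemma diff_mono_minuend: "x \<le> y \<Longrightarrow> x - v \<le> y - (v::'a)"
  by (metis diff_le_iff order.trans order.refl)

lemma inf_diff_assoc: "inf x y - (v::'a) = inf x (y - v)"
proof (rule diff_unique)
  show "inf (inf x (y - v)) v = bot" by (metis inf_diff_self inf_assoc inf_commute inf_bot_absorb)
  have "sup (inf x (y - v)) v = inf (sup x v) (sup v y)"
    by (simp add: sup_inf_distrib2 sup_diff_self)
  also have "\<dots> = sup v (inf x y)" by (simp add: sup_inf_distrib1 sup_commute)
  finally show "sup (inf x (y - v)) v = sup v (inf x y)" .
qed

lemma inf_diff_distrib: "inf (x - y) (v::'a) = inf x v - inf y v"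
proof (rule diff_unique[symmetric])
  show "inf (inf (x - y) v) (inf y v) = bot" by (metis inf_diff_self inf_aci(1,2,3) inf_bot_absorb)
  have "sup (inf (x - y) v) (inf y v) = inf (sup y x) v"
    by (simp add: inf_sup_distrib2[symmetric] sup_diff_self)
  then show "sup (inf (x - y) v) (inf y v) = sup (inf y v) (inf x v)"
    by (simp add: inf_sup_distrib2)
qed

lemma inf_diff_inf: "inf R a - inf R b = inf R (a - (b::'a))"
  using inf_diff_distrib[of a b R] by (simp add: inf_commute)

lemma sup_inf_diff: "sup (inf x y) (x - y) = (x::'a)"
  by (simp add: sup_inf_distrib2 sup_diff_absorb sup_absorb1 inf_absorb1 diff_le_minuend)

lemma diff_disjoint: "inf a x = bot \<Longrightarrow> a - x = (a::'a)"
  by (rule diff_unique) (simp_all add: sup_commute)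

lemma le_diff_iff_disjoint: "x \<le> a - s \<longleftrightarrow> x \<le> a \<and> inf x (s::'a) = bot"
proof
  assume "x \<le> a - s"
  then show "x \<le> a \<and> inf x s = bot"
    using diff_le_minuend inf_eq_bot_mono[OF _ inf_diff_self] by (blast intro: order.trans)
next
  assume "x \<le> a \<and> inf x s = bot"
  then show "x \<le> a - s" by (metis diff_disjoint diff_mono_minuend)
qed

lemma diff_diff_self: "(a::'a) - (a - b) = inf a b"
proof (rule diff_unique)
  show "inf (inf a b) (a - b) = bot" by (metis inf_diff_self inf_aci(1,2,3) inf_bot_absorb)
  show "sup (inf a b) (a - b) = sup (a - b) a"
    by (simp add: sup_inf_diff sup_absorb2 diff_le_minuend)
qed

lemma bot_diff: "(bot::'a) - x = bot"
  by (simp add: diff_eq_bot_iff)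

lemma diff_bot: "(x::'a) - bot = x"
  by (simp add: diff_disjoint)

lemma sym_diff_eq_bot_iff: "sup ((x::'a) - y) (y - x) = bot \<longleftrightarrow> x = y"
  by (metis antisym sup_eq_bot diff_eq_bot_iff order_refl)

lemma inf_supremum_eq_bot:
  assumes "is_supremum s Y" and "\<forall>a\<in>Y. inf x a = bot"
  shows "inf x (s::'a) = bot"
proof -
  have "a \<le> s - x" if "a \<in> Y" for a
  proof -
    have "a = a - x" using assms(2) that by (simp add: diff_disjoint inf_commute)
    also have "\<dots> \<le> s - x" using assms(1) that by (intro diff_mono_minuend) (auto simp: is_supremum_def)
    finally show ?thesis .
  qed
  then have "s \<le> s - x" using assms(1) by (auto simp: is_supremum_def)
  then show ?thesis by (metis inf_eq_bot_mono inf_diff_self inf_commute)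
qed

section \<open>Terms evaluated on a cell\<close>

lemma cell_sup: "cell v n S (sup x y) = sup (cell v n S x) (cell v n S (y::'a))"
  by (induction n) (auto simp: inf_sup_distrib2 sup_diff_distrib)

lemma cell_inf_left: "cell v n S (inf x y) = inf x (cell v n S (y::'a))"
  by (induction n) (auto simp: inf_assoc inf_diff_assoc)

lemma cell_diff: "cell v n S (x - y) = cell v n S x - cell v n S (y::'a)"
proof (induction n)
  case (Suc n)
  then show ?case
    using diff_diff_distrib[of "cell v n S x" "cell v n S y" "v n"] by (simp add: inf_diff_distrib)
qed simp

lemma cell_bot: "cell v n S (bot::'a) = bot"
  by (induction n) (auto simp: bot_diff)

lemma cell_le: "cell v n S (x::'a) \<le> x"
  by (induction n) (auto intro: le_infI1 order_trans[OF diff_le_minuend])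

lemma cell_mono: "(x::'a) \<le> y \<Longrightarrow> cell v n S x \<le> cell v n S y"
  by (metis cell_inf_left inf_absorb1 inf.cobounded2)

lemma cell_inf: "cell v n S (inf x y) = inf (cell v n S x) (cell v n S (y::'a))"
proof (rule antisym)
  show "cell v n S (inf x y) \<le> inf (cell v n S x) (cell v n S y)"
    by (simp add: cell_mono)
  have "inf (cell v n S x) (cell v n S y) \<le> inf x (cell v n S y)"
    using cell_le by (rule inf_mono) simp
  then show "inf (cell v n S x) (cell v n S y) \<le> cell v n S (inf x y)"
    by (simp add: cell_inf_left)
qed

lemma cell_le_var: "i \<in> S \<Longrightarrow> i < n \<Longrightarrow> cell v n S (x::'a) \<le> v i"
proof (induction n)
  case (Suc n)
  then show ?case
    by (cases "i = n") (auto intro: le_infI1 order_trans[OF diff_le_minuend])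
qed simp

lemma cell_var_outside: "i \<notin> S \<Longrightarrow> i < n \<Longrightarrow> cell v n S ((v::nat \<Rightarrow> 'a) i) = bot"
proof (induction n)
  case (Suc n)
  show ?case
  proof (cases "i = n")
    case True
    then show ?thesis
      using Suc.prems cell_le[of v n S "v i"] by (simp add: diff_eq_bot_iff)
  next
    case False
    then show ?thesis using Suc by (simp add: bot_diff)
  qed
qed simp

lemma cell_insert_above: "n \<le> m \<Longrightarrow> cell v n (insert m S) (x::'a) = cell v n S x"
  by (induction n) auto

lemma eq_bot_if_cells_bot: "(\<And>S. S \<subseteq> {..<n} \<Longrightarrow> cell v n S (x::'a) = bot) \<Longrightarrow> x = bot"
proof (induction n)
  case 0
  then show ?case by (metis empty_subsetI cell.simps(1))
next
  case (Suc n)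
  show ?case
  proof (rule Suc.IH)
    fix S assume S: "S \<subseteq> {..<n}"
    then have "n \<notin> S" "S \<subseteq> {..<Suc n}" "insert n S \<subseteq> {..<Suc n}" by auto
    then have "cell v n S x - v n = bot" and "inf (cell v n S x) (v n) = bot"
      using Suc.prems[of S] Suc.prems[of "insert n S"] by (simp_all add: cell_insert_above)
    then show "cell v n S x = bot" by (metis sup_inf_diff bot_sup_absorb)
  qed
qed

lemma cell_empty: "cell v n {} (x::'a) = x - eval v (join_vars n)"
  by (induction n) (auto simp: diff_diff_sup diff_bot)

lemma cell_eq_inf_cell_var: "i \<in> S \<Longrightarrow> i < n \<Longrightarrow> cell v n S (x::'a) = inf x (cell v n S (v i))"
  by (metis cell_inf_left cell_le_var inf.absorb2 inf_commute)

lemma cell_eval: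
  fixes v :: "nat \<Rightarrow> 'a"
  assumes S: "S \<subseteq> {..<n}" "i \<in> S" and t: "vars t \<subseteq> {..<n}"
  defines "R \<equiv> cell v n S (v i)"
  shows "cell v n S (eval v t) = inf R (eval (atom_valuation S R) t)"
  using t
proof (induction t)
  case (Var j)
  have "i < n" "j < n" using S Var by auto
  then show ?case
    using S(2) cell_var_outside[of j S n v] cell_eq_inf_cell_var[of i S n v "v j"]
      cell_le_var[of j S n v "v i"]
    unfolding R_def atom_valuation_def by (auto simp: inf_commute inf_absorb2)
next
  case (Cst c)
  have "i < n" using S by auto
  then show ?case using S(2) cell_eq_inf_cell_var[of i S n v c] unfolding R_def by (simp add: inf_commute)
next
  case (Join t s)
  then show ?case by (simp add: cell_sup inf_sup_distrib1)
next
  case (Meet t s)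
  then show ?case by (simp add: cell_inf inf_aci)
next
  case (Diff t s)
  then show ?case by (simp add: cell_diff inf_diff_inf)
qed (simp add: cell_bot)

lemma cell_empty_eval:
  "vars t \<subseteq> {..<n} \<Longrightarrow> cell v n {} (eval v t) = cell v n {} (eval (\<lambda>_. bot) (t::'a trm))"
proof (induction t)
  case (Var i)
  then show ?case using cell_var_outside[of i "{}" n v] by (simp add: cell_bot)
qed (auto simp: cell_sup cell_inf cell_diff cell_bot)

lemma sup_inf_diff_same: "sup (inf R a) (R - b) = R - (b - (a::'a))"
proof (rule eq_if_same_upper_bounds)
  fix z
  show "sup (inf R a) (R - b) \<le> z \<longleftrightarrow> R - (b - a) \<le> z"
  proof
    assume "sup (inf R a) (R - b) \<le> z"
    then have Ra: "inf R a \<le> z" and Rb: "R \<le> sup b z" by (simp_all add: diff_le_iff)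
    have "R - a \<le> sup b z - a" using Rb by (rule diff_mono_minuend)
    also have "\<dots> = sup (b - a) (z - a)" by (rule sup_diff_distrib)
    also have "\<dots> \<le> sup (b - a) z" by (rule sup_mono[OF order.refl diff_le_minuend])
    finally have "R \<le> sup a (sup (b - a) z)" by (simp only: diff_le_iff)
    then have "R \<le> inf R (sup a (sup (b - a) z))" by simp
    also have "\<dots> = sup (inf R a) (inf R (sup (b - a) z))" by (rule inf_sup_distrib1)
    also have "\<dots> \<le> sup (b - a) z" by (rule sup_least[OF le_supI2[OF Ra] inf.cobounded2])
    finally show "R - (b - a) \<le> z" by (simp only: diff_le_iff)
  next
    assume "R - (b - a) \<le> z"
    then have R: "R \<le> sup (b - a) z" by (simp only: diff_le_iff)
    have "R \<le> sup b z" using R sup_mono[OF diff_le_minuend order.refl] by (rule order.trans)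
    moreover have "inf R a \<le> inf (sup (b - a) z) a" using R by (rule inf_mono[OF _ order.refl])
    moreover have "inf (sup (b - a) z) a = inf z a" by (simp add: inf_sup_distrib2 inf_diff_self)
    ultimately show "sup (inf R a) (R - b) \<le> z" by (simp add: diff_le_iff le_infI1)
  qed
qed

lemma sup_diff_same: "sup (R - a) (R - b) = R - inf a (b::'a)"
  by (rule eq_if_same_upper_bounds) (simp add: diff_le_iff sup_inf_distrib2)

lemma inf_inf_diff_same: "inf (inf R a) (R - b) = inf R (a - (b::'a))"
proof -
  have "inf (inf R a) (R - b) = inf a (inf R (R - b))" by (simp add: inf_aci)
  also have "inf R (R - b) = R - b" by (simp add: inf_absorb2 diff_le_minuend)
  finally show ?thesis using inf_diff_assoc[of a R b] inf_diff_assoc[of R a b]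
    by (simp add: inf_commute)
qed

lemma inf_diff_same: "inf (R - a) (R - b) = R - sup a (b::'a)"
  using inf_diff_assoc[of "R - a" R b] by (simp add: inf_absorb1 diff_le_minuend diff_diff_sup)

lemma inf_diff_diff_same: "inf R a - (R - b) = inf R (inf a (b::'a))"
  using inf_diff_assoc[of a R "R - b"] by (simp add: diff_diff_self inf_aci)

lemma diff_diff_inf_same: "(R - a) - inf R b = R - sup a (b::'a)"
proof -
  have "(R - a) - inf R b = R - inf R (sup a (inf R b))"
    by (simp add: diff_diff_sup flip: diff_inf_right)
  also have "inf R (sup a (inf R b)) = inf R (sup a b)" by (simp add: inf_sup_distrib1)
  finally show ?thesis by (simp flip: diff_inf_right)
qed

lemma diff_diff_same: "(R - a) - (R - b) = inf R (b - (a::'a))"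
proof -
  have "(R - a) - (R - b) = R - sup (R - b) a" by (simp add: diff_diff_sup sup_commute)
  also have "\<dots> = (R - (R - b)) - a" by (simp add: diff_diff_sup)
  finally show ?thesis by (simp add: diff_diff_self inf_diff_assoc)
qed

lemma form_val_join: "sup (form_val f R) (form_val g R) = form_val (join_form f g) (R::'a)"
proof -
  obtain p a q b where "f = (p, a)" "g = (q, b)" by fastforce
  then show ?thesis
    using sup_inf_diff_same[of R] sup_diff_same[of R]
    by (cases p; cases q) (simp_all add: form_val_def inf_sup_distrib1 sup_commute)
qed

lemma form_val_meet: "inf (form_val f R) (form_val g R) = form_val (meet_form f g) (R::'a)"
proof -
  have "inf (inf R a) (inf R b) = inf R (inf a b)" for a b :: 'a
    by (simp add: inf_aci)
  moreover have "inf (R - a) (inf R b) = inf R (b - a)" for a b :: 'a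
    using inf_inf_diff_same[of R b a] by (simp add: inf_commute)
  moreover obtain p a q b where "f = (p, a)" "g = (q, b)" by fastforce
  ultimately show ?thesis
    using inf_inf_diff_same[of R] inf_diff_same[of R]
    by (cases p; cases q) (simp_all add: form_val_def)
qed

lemma form_val_diff: "form_val f R - form_val g R = form_val (diff_form f g) (R::'a)"
proof -
  obtain p a q b where "f = (p, a)" "g = (q, b)" by fastforce
  then show ?thesis
    using inf_diff_diff_same[of R] diff_diff_inf_same[of R] diff_diff_same[of R]
    by (cases p; cases q) (simp_all add: form_val_def inf_diff_inf)
qed

lemma inf_eval_atom_valuation: "inf R (eval (atom_valuation S R) t) = form_val (form S t) (R::'a)"
proof (induction t)
  case (Var i)
  then show ?case by (simp add: atom_valuation_def form_val_def diff_bot)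
next
  case (Join t s)
  then show ?case by (simp add: inf_sup_distrib1 flip: form_val_join)
next
  case (Meet t s)
  have "inf R (eval (atom_valuation S R) (Meet t s)) =
        inf (inf R (eval (atom_valuation S R) t)) (inf R (eval (atom_valuation S R) s))"
    by (simp add: inf_aci)
  then show ?case using Meet by (simp add: form_val_meet)
next
  case (Diff t s)
  then show ?case by (simp flip: form_val_diff inf_diff_inf)
qed (simp_all add: form_val_def)

section \<open>Each equation is equivalent to its vanishing system\<close>

lemma sol_below_eqns: "sol (below_eqn t ` Y) = {v. \<forall>a\<in>Y. eval v t \<le> (a::'a)}"
  by (auto simp: sol_def below_eqn_def diff_eq_bot_iff)

lemma sol_above_eqns: "sol (above_eqn t ` Y) = {v. \<forall>a\<in>Y. (a::'a) \<le> eval v t}"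
  by (auto simp: sol_def above_eqn_def diff_eq_bot_iff)

lemma sol_cell_eqn:
  assumes S: "S \<in> index_sets n" and t: "vars t \<subseteq> {..<n}"
  shows "v \<in> sol {cell_eqn n t S} \<longleftrightarrow> cell v n S (eval v t) = (bot::'a)"
proof -
  define R where "R = cell v n S (v (Min S))"
  have "Min S \<in> S" using S finite_subset[of S "{..<n}"] by (auto simp: index_sets_def)
  then have "cell v n S (eval v t) = form_val (form S t) R"
    using S t cell_eval[of S n "Min S" t v] by (simp add: R_def index_sets_def inf_eval_atom_valuation)
  moreover have "eval v (atom_trm n S) = R" by (simp add: atom_trm_def eval_cell_trm R_def)
  ultimately show ?thesis
    by (simp add: sol_def cell_eqn_def disj_eqn_def below_eqn_def form_val_def)
qed

lemma sol_above_join_vars: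
  "vars t \<subseteq> {..<n} \<Longrightarrow>
   v \<in> sol {above_eqn (join_vars n) (eval (\<lambda>_. bot) t)} \<longleftrightarrow> cell v n {} (eval v t) = (bot::'a)"
  using cell_empty_eval[of t n v] by (simp add: sol_def above_eqn_def cell_empty)

lemma sol_vanishing_system:
  assumes "vars t \<subseteq> {..<n}"
  shows "sol (vanishing_system n t) = {v. eval v t = (bot::'a)}"
proof -
  have "v \<in> sol (vanishing_system n t) \<longleftrightarrow> (\<forall>S. S \<subseteq> {..<n} \<longrightarrow> cell v n S (eval v t) = bot)"
    for v
  proof -
    have "v \<in> sol (vanishing_system n t) \<longleftrightarrow>
        v \<in> sol {above_eqn (join_vars n) (eval (\<lambda>_. bot) t)} \<and>
        (\<forall>S\<in>index_sets n. v \<in> sol {cell_eqn n t S})"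
      by (auto simp: vanishing_system_def sol_def)
    also have "\<dots> \<longleftrightarrow> cell v n {} (eval v t) = bot \<and>
        (\<forall>S\<in>index_sets n. cell v n S (eval v t) = bot)"
      using assms by (simp add: sol_above_join_vars sol_cell_eqn)
    also have "\<dots> \<longleftrightarrow> (\<forall>S. S \<subseteq> {..<n} \<longrightarrow> cell v n S (eval v t) = bot)"
      by (auto simp: index_sets_def)
    finally show ?thesis .
  qed
  moreover have "(\<forall>S. S \<subseteq> {..<n} \<longrightarrow> cell v n S x = bot) \<longleftrightarrow> x = bot" for v and x :: 'a
    using eq_bot_if_cells_bot[of n v x] by (auto simp: cell_bot)
  ultimately show ?thesis by auto
qed

lemma sol_eqn_vanishing_system:
  assumes "vars (fst e) \<union> vars (snd e) \<subseteq> {..<n}"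
  shows "sol {e} = sol (vanishing_system n (sym_diff_trm (e::'a eqn)))"
proof -
  have "vars (sym_diff_trm e) \<subseteq> {..<n}" using assms by (auto simp: sym_diff_trm_def)
  then show ?thesis
    by (simp add: sol_vanishing_system) (auto simp: sol_def sym_diff_trm_def sym_diff_eq_bot_iff)
qed

section \<open>Sufficiency of the two conditions\<close>

lemma finitely_equivalent_disj_eqns:
  fixes C :: "'a set"
  assumes C: "bounded_sups_in C" "principal_annihilators C"
    and t: "csts t \<subseteq> C" "vars t \<subseteq> {..<n}" and Y: "Y \<subseteq> C"
  shows "finitely_equivalent C n (disj_eqn t ` Y)"
proof (cases "bounded_above Y")
  case True
  then obtain s where "s \<in> C" and s: "is_supremum s Y"
    using C(1) Y unfolding bounded_sups_in_def by blast
  have "(\<forall>a\<in>Y. inf x a = bot) \<longleftrightarrow> inf x s = (bot::'a)" for x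
  proof
    assume "inf x s = bot"
    then show "\<forall>a\<in>Y. inf x a = bot"
      using s inf_eq_bot_mono[of _ s x] by (auto simp: is_supremum_def inf_commute)
  qed (use s inf_supremum_eq_bot in blast)
  then have "sol {disj_eqn t s} = sol (disj_eqn t ` Y)"
    using sol_disj_eqns[of t "{s}"] by (simp add: sol_disj_eqns)
  then show ?thesis using eqn_over_basic(1)[OF \<open>s \<in> C\<close> t] by (rule finitely_equivalentI)
next
  case False
  then obtain c where "c \<in> C" and c: "\<And>x. (\<forall>a\<in>Y. inf x a = bot) \<longleftrightarrow> x \<le> c"
    using C(2) Y unfolding principal_annihilators_iff by blast
  then have "sol {below_eqn t c} = sol (disj_eqn t ` Y)"
    using sol_below_eqns[of t "{c}"] by (simp add: sol_disj_eqns)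
  then show ?thesis using eqn_over_basic(2)[OF \<open>c \<in> C\<close> t] by (rule finitely_equivalentI)
qed

lemma lower_bounds_eq_diff_supremum:
  fixes Y :: "'a set"
  assumes "a0 \<in> Y" and s: "is_supremum s ((\<lambda>a. a0 - a) ` Y)"
  shows "(\<forall>a\<in>Y. x \<le> a) \<longleftrightarrow> x \<le> a0 - (s::'a)"
proof
  assume lb: "\<forall>a\<in>Y. x \<le> a"
  have "inf x b = bot" if b: "b \<in> (\<lambda>a. a0 - a) ` Y" for b
  proof -
    obtain a where "a \<in> Y" "b = a0 - a" using b by blast
    moreover have "inf a (a0 - a) = bot" using inf_diff_self[of a0 a] by (simp add: inf_commute)
    ultimately show ?thesis using lb inf_eq_bot_mono[of x a "a0 - a"] by simp
  qed
  then have "inf x s = bot" using s inf_supremum_eq_bot by blast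
  then show "x \<le> a0 - s" using lb assms(1) by (simp add: le_diff_iff_disjoint)
next
  assume "x \<le> a0 - s"
  then have x: "x \<le> a0" "inf x s = bot" by (simp_all add: le_diff_iff_disjoint)
  show "\<forall>a\<in>Y. x \<le> a"
  proof
    fix a assume "a \<in> Y"
    then have "a0 - a \<le> s" using s by (auto simp: is_supremum_def)
    then have "inf x (a0 - a) = bot" using x(2) by (metis inf_eq_bot_mono inf_commute)
    then have "x \<le> a0 - (a0 - a)" using x(1) by (simp add: le_diff_iff_disjoint)
    then show "x \<le> a" by (simp add: diff_diff_self)
  qed
qed

lemma finitely_equivalent_below_eqns:
  fixes C :: "'a set"
  assumes C: "ershov_subalgebra C" "bounded_sups_in C"
    and t: "csts t \<subseteq> C" "vars t \<subseteq> {..<n}" and Y: "Y \<subseteq> C"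
  shows "finitely_equivalent C n (below_eqn t ` Y)"
proof (cases "Y = {}")
  case True
  then show ?thesis unfolding finitely_equivalent_def by (intro exI[of _ "{}"]) auto
next
  case False
  then obtain a0 where "a0 \<in> Y" by blast
  have "(\<lambda>a. a0 - a) ` Y \<subseteq> C" using C(1) Y \<open>a0 \<in> Y\<close> by (auto simp: ershov_subalgebra_def)
  moreover have "bounded_above ((\<lambda>a. a0 - a) ` Y)"
    unfolding bounded_above_def using diff_le_minuend by blast
  ultimately obtain s where "s \<in> C" and s: "is_supremum s ((\<lambda>a. a0 - a) ` Y)"
    using C(2) unfolding bounded_sups_in_def by blast
  have "a0 - s \<in> C" using C(1) Y \<open>a0 \<in> Y\<close> \<open>s \<in> C\<close> by (auto simp: ershov_subalgebra_def)
  have "sol {below_eqn t (a0 - s)} = sol (below_eqn t ` Y)"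
    using lower_bounds_eq_diff_supremum[OF \<open>a0 \<in> Y\<close> s] sol_below_eqns[of t "{a0 - s}"]
    by (simp add: sol_below_eqns)
  then show ?thesis using eqn_over_basic(2)[OF \<open>a0 - s \<in> C\<close> t] by (rule finitely_equivalentI)
qed

lemma finitely_equivalent_above_eqns:
  fixes C :: "'a set"
  assumes C: "bounded_sups_in C"
    and t: "csts t \<subseteq> C" "vars t \<subseteq> {..<n}" and Y: "Y \<subseteq> C"
  shows "finitely_equivalent C n (above_eqn t ` Y)"
proof (cases "bounded_above Y")
  case True
  then obtain s where "s \<in> C" and s: "is_supremum s Y"
    using C Y unfolding bounded_sups_in_def by blast
  then have "(\<forall>a\<in>Y. a \<le> x) \<longleftrightarrow> s \<le> (x::'a)" for x
    unfolding is_supremum_def by (meson order_trans)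
  then have "sol {above_eqn t s} = sol (above_eqn t ` Y)"
    using sol_above_eqns[of t "{s}"] by (simp add: sol_above_eqns)
  then show ?thesis using eqn_over_basic(3)[OF \<open>s \<in> C\<close> t] by (rule finitely_equivalentI)
next
  case False
  then obtain a where "a \<in> Y" "a \<noteq> bot"
    unfolding bounded_above_def by (metis bot_unique order_refl)
  have "sol (above_eqn t ` Y) = {}"
    using False unfolding sol_above_eqns bounded_above_def by blast
  moreover have "sol {(Cst a, Zero)} = {}" using \<open>a \<noteq> bot\<close> by (simp add: sol_def)
  moreover have "eqn_over C n (Cst a, Zero)" using \<open>a \<in> Y\<close> Y by (auto simp: eqn_over_def)
  ultimately show ?thesis by (intro finitely_equivalentI) auto
qed

lemma weakly_eq_noetherian_if:
  fixes C :: "'a set"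
  assumes C: "ershov_subalgebra C" "bounded_sups_in C" "principal_annihilators C"
  shows "weakly_eq_noetherian C"
  unfolding weakly_eq_noetherian_iff
proof (intro allI impI)
  fix n and A :: "'a eqn set"
  assume A: "\<forall>e\<in>A. eqn_over C n e"
  define U where "U = (\<Union>e\<in>A. vanishing_system n (sym_diff_trm e))"
  define Fs :: "('a \<Rightarrow> 'a eqn) set" where "Fs = insert (above_eqn (join_vars n))
    ((\<lambda>S. disj_eqn (atom_trm n S)) ` index_sets n \<union> (\<lambda>S. below_eqn (atom_trm n S)) ` index_sets n)"
  have "sol {e} = sol (vanishing_system n (sym_diff_trm e))" if "e \<in> A" for e
    using A that by (intro sol_eqn_vanishing_system) (auto simp: eqn_over_def)
  then have "sol U = sol A" unfolding U_def sol_UN sol_eq_INT_singletons[of A] by simp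
  moreover have "finitely_equivalent C n U"
  proof (rule finitely_equivalent_families[of Fs])
    show "finite Fs" by (simp add: Fs_def finite_index_sets)
    have "csts (sym_diff_trm e) \<subseteq> C" if "e \<in> A" for e
      using A that by (auto simp: eqn_over_def sym_diff_trm_def)
    then show "U \<subseteq> (\<Union>f\<in>Fs. f ` C)"
      unfolding U_def Fs_def using vanishing_system_subset[OF C(1)] by fastforce
    show "finitely_equivalent C n (f ` Y)" if "f \<in> Fs" and Y: "Y \<subseteq> C" for f Y
    proof -
      consider "f = above_eqn (join_vars n)"
        | S where "S \<in> index_sets n" "f = disj_eqn (atom_trm n S)"
        | S where "S \<in> index_sets n" "f = below_eqn (atom_trm n S)"
        using \<open>f \<in> Fs\<close> unfolding Fs_def by blast
      then show ?thesis
      proof cases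
        case 1
        then show ?thesis
          using finitely_equivalent_above_eqns[OF C(2) _ vars_join_vars Y] by (simp add: csts_join_vars)
      next
        case (2 S)
        then show ?thesis
          using atom_trm_over[OF \<open>S \<in> index_sets n\<close>]
          by (auto intro!: finitely_equivalent_disj_eqns[OF C(2,3) _ _ Y])
      next
        case (3 S)
        then show ?thesis
          using atom_trm_over[OF \<open>S \<in> index_sets n\<close>]
          by (auto intro!: finitely_equivalent_below_eqns[OF C(1,2) _ _ Y])
      qed
    qed
  qed
  ultimately show "finitely_equivalent C n A" by (simp add: finitely_equivalent_def)
qed

section \<open>Necessity of the two conditions\<close>

lemma basic_solset_single:
  fixes C :: "'a set"
  assumes C: "ershov_subalgebra C" and e: "eqn_over C 1 e"
  shows "basic_solset C (sol {e::'a eqn})"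
proof -
  define t where "t = sym_diff_trm e"
  have t: "vars t \<subseteq> {..<1}" "csts t \<subseteq> C"
    using e by (auto simp: t_def sym_diff_trm_def eqn_over_def)
  define c where "c = eval (\<lambda>_. bot) t"
  obtain p a where f: "form {0} t = (p, a)" by fastforce
  have "c \<in> C" using C t eval_in_subalgebra[of C t] by (auto simp: c_def ershov_subalgebra_def)
  have "a \<in> C" using form_in_subalgebra[OF C t(2), of "{0}"] by (simp add: f)
  then have "(if p then a else bot) \<in> C" using C by (simp add: ershov_subalgebra_def)
  have "index_sets 1 = {{0}}"
    unfolding index_sets_def lessThan_Suc lessThan_0 by auto
  then have sys: "vanishing_system 1 t = {above_eqn (join_vars 1) c, cell_eqn 1 t {0}}"
    by (simp add: vanishing_system_def c_def)
  have "vars (fst e) \<union> vars (snd e) \<subseteq> {..<1}" using e by (simp add: eqn_over_def)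
  then have "sol {e} = sol (vanishing_system 1 t)" unfolding t_def by (rule sol_eqn_vanishing_system)
  also have "\<dots> = {v. c \<le> v 0 \<and> inf (v 0) (if p then a else bot) = bot \<and> (\<not> p \<longrightarrow> v 0 \<le> a)}"
    unfolding sys
    by (auto simp: sol_def above_eqn_def cell_eqn_def disj_eqn_def below_eqn_def atom_trm_def f
        diff_eq_bot_iff)
  finally show ?thesis
    unfolding basic_solset_def
    by (intro bexI[OF _ \<open>c \<in> C\<close>] bexI[OF _ \<open>(if p then a else bot) \<in> C\<close>]
        bexI[OF _ \<open>a \<in> C\<close>] exI[of _ "\<not> p"])
qed

lemma basic_solset_if_noetherian:
  fixes C :: "'a set"
  assumes C: "ershov_subalgebra C" "weakly_eq_noetherian C" and A: "\<forall>e\<in>A. eqn_over C 1 e"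
  shows "basic_solset C (sol (A::'a eqn set))"
proof -
  have "finitely_equivalent C 1 A" using C(2) A by (simp add: weakly_eq_noetherian_iff)
  then obtain F where F: "finite F" "\<forall>e\<in>F. eqn_over C 1 e" and "sol F = sol A"
    unfolding finitely_equivalent_def by blast
  have "basic_solset C (sol F)"
    using F
  proof (induction F rule: finite_induct)
    case empty
    have "sol {} = (UNIV :: (nat \<Rightarrow> 'a) set)" by (simp add: sol_def)
    then show ?case using basic_solset_UNIV[OF C(1)] by simp
  next
    case (insert e F)
    have "sol (insert e F) = sol {e} \<inter> sol F" using sol_Un[of "{e}" F] by simp
    moreover have "basic_solset C (sol {e})" using insert.prems by (simp add: basic_solset_single[OF C(1)])
    ultimately show ?case using insert.IH insert.prems basic_solset_Int[OF C(1)] by simp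
  qed
  then show ?thesis using \<open>sol F = sol A\<close> by simp
qed

lemma bounded_sups_in_if_noetherian:
  fixes C :: "'a set"
  assumes C: "ershov_subalgebra C" "weakly_eq_noetherian C"
  shows "bounded_sups_in C"
  unfolding bounded_sups_in_def
proof (intro allI impI)
  fix X :: "'a set"
  assume X: "X \<subseteq> C \<and> bounded_above X"
  then obtain u where u: "\<forall>c\<in>X. c \<le> u" by (auto simp: bounded_above_def)
  have "basic_solset C (sol (above_eqn (Var 0) ` X))"
    using X by (intro basic_solset_if_noetherian[OF C]) (auto simp: eqn_over_def above_eqn_def)
  moreover have "v \<in> sol (above_eqn (Var 0) ` X) \<longleftrightarrow> (\<forall>c\<in>X. c \<le> v 0)" for v
    by (simp add: sol_above_eqns)
  ultimately obtain d p q b where "d \<in> C" "p \<in> C" "q \<in> C"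
    and ub: "\<And>x. (\<forall>c\<in>X. c \<le> x) \<longleftrightarrow> d \<le> x \<and> inf x p = bot \<and> (b \<longrightarrow> x \<le> q)"
    by (rule basic_solset_pointwise) (rule that)
  have "d \<le> u" "inf u p = bot" "b \<longrightarrow> u \<le> q" using ub[of u] u by simp_all
  then have "d \<le> d \<and> inf d p = bot \<and> (b \<longrightarrow> d \<le> q)"
    using inf_eq_bot_mono[of d u p] by (auto intro: order.trans)
  then have "\<forall>c\<in>X. c \<le> d" using ub[of d] by simp
  moreover have "\<forall>y. (\<forall>c\<in>X. c \<le> y) \<longrightarrow> d \<le> y" using ub by simp
  ultimately show "\<exists>s\<in>C. is_supremum s X" using \<open>d \<in> C\<close> unfolding is_supremum_def by blast
qed

lemma principal_annihilators_if_noetherian: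
  fixes C :: "'a set"
  assumes C: "ershov_subalgebra C" "weakly_eq_noetherian C"
  shows "principal_annihilators C"
  unfolding principal_annihilators_iff
proof (intro allI impI)
  fix X :: "'a set"
  assume X: "X \<subseteq> C \<and> \<not> bounded_above X"
  have "basic_solset C (sol (disj_eqn (Var 0) ` X))"
    using X by (intro basic_solset_if_noetherian[OF C]) (auto simp: eqn_over_def disj_eqn_def)
  moreover have "v \<in> sol (disj_eqn (Var 0) ` X) \<longleftrightarrow> (\<forall>a\<in>X. inf (v 0) a = bot)" for v
    by (simp add: sol_disj_eqns)
  ultimately obtain d p q b where "d \<in> C" "p \<in> C" "q \<in> C"
    and ann: "\<And>x. (\<forall>a\<in>X. inf x a = bot) \<longleftrightarrow> d \<le> x \<and> inf x p = bot \<and> (b \<longrightarrow> x \<le> q)"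
    by (rule basic_solset_pointwise) (rule that)
  have "d = bot" using ann[of bot] by (simp add: bot_unique)
  have b
  proof (rule ccontr)
    assume "\<not> b"
    have "a \<le> p" if "a \<in> X" for a
    proof -
      have "\<forall>a'\<in>X. inf (a - p) a' = bot"
        using ann[of "a - p"] \<open>\<not> b\<close> \<open>d = bot\<close> inf_diff_self[of a p] by simp
      then have "inf (a - p) a = bot" using that by blast
      then show "a \<le> p" by (simp add: inf_absorb1 diff_le_minuend diff_eq_bot_iff)
    qed
    then show False using X unfolding bounded_above_def by blast
  qed
  then have "(\<forall>a\<in>X. inf x a = bot) \<longleftrightarrow> x \<le> q - p" for x
    using ann[of x] \<open>d = bot\<close> by (auto simp: le_diff_iff_disjoint)
  moreover have "q - p \<in> C" using C(1) \<open>p \<in> C\<close> \<open>q \<in> C\<close> by (simp add: ershov_subalgebra_def)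
  ultimately show "\<exists>c\<in>C. \<forall>x. (\<forall>a\<in>X. inf x a = bot) \<longleftrightarrow> x \<le> c" by blast
qed

end

theorem mainTheorem8:
  fixes C :: "'a::{distrib_lattice,order_bot,minus} set"
  assumes "ershov_algebra TYPE('a)"
    and "ershov_subalgebra C"
  shows "weakly_eq_noetherian C \<longleftrightarrow>
     ((\<forall>X. X \<subseteq> C \<and> bounded_above X \<longrightarrow> (\<exists>s\<in>C. is_supremum s X)) \<and>
      (\<forall>X. X \<subseteq> C \<and> \<not> bounded_above X \<longrightarrow>
         (\<exists>c\<in>C. sol ((\<lambda>cj. (Meet (Var 0) (Cst cj), Zero)) ` X)
                 = sol {leq_eqn (Var 0) (Cst c)})))"
proof -
  have "weakly_eq_noetherian C \<longleftrightarrow> bounded_sups_in C \<and> principal_annihilators C"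
    using bounded_sups_in_if_noetherian[OF assms] principal_annihilators_if_noetherian[OF assms]
      weakly_eq_noetherian_if[OF assms] by blast
  then show ?thesis unfolding bounded_sups_in_def principal_annihilators_def .
qed

end
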